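(* Let $n$ and $k$ be nonnegative integers with $k\le n$. Then $$\sum_{m=k}^{n}\binom{n}{m}\binom{m+2k}{3k}(-1)^{m-k}=(-1)^{n-k}\binom{2k}{n-k}.$$
   Context: Binomial coefficients $\binom{a}{b}$ for nonnegative integers $a,b$ are the usual ones, with $\binom{a}{b}=0$ when $b>a$. *)

theory Defs
  imports Main
begin

end

theory Submission
  imports Defs
begin

(* Write fdiff g = (m \<mapsto> g (m+1) - g m) for the forward difference.
   Two classical facts are established first:
   (1) the n-th forward difference is the alternating binomial sum
         (fdiff^^n) g m = \<Sum>j\<le>n. C(n,j) (-1)^(n-j) g (m+j);
   (2) by Pascal's rule, fdiff maps m \<mapsto> C(m+x, b+1) to m \<mapsto> C(m+x, b), hence
         (fdiff^^n) (m \<mapsto> C(m+x, b)) = (m \<mapsto> C(m+x, b-n))  if n \<le> b, and 0 otherwise.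
   For the theorem, the terms with m < k vanish (C(m+2k,3k) = 0), so the sum runs
   over m \<le> n, and after pulling out the sign (-1)^(n-k) it is (fdiff^^n) applied to
   m \<mapsto> C(m+2k,3k) at 0, i.e. C(2k, 3k-n) = C(2k, n-k) by symmetry (or 0 if n > 3k,
   where also C(2k, n-k) = 0). *)

definition fdiff :: "(nat \<Rightarrow> 'a::ab_group_add) \<Rightarrow> nat \<Rightarrow> 'a" where
  "fdiff g m = g (Suc m) - g m"

lemma iter_fdiff_eq_sum:
  fixes g :: "nat \<Rightarrow> 'a::comm_ring_1"
  shows "(fdiff ^^ n) g m = (\<Sum>j\<le>n. of_nat (n choose j) * (-1) ^ (n - j) * g (m + j))"
proof (induction n arbitrary: m)
  case 0
  show ?case by simp
next
  case (Suc n)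
  let ?t = "\<lambda>j. of_nat (n choose j) * (-1) ^ (n - j) :: 'a"
  have pascal: "(\<Sum>j\<le>Suc n. of_nat (Suc n choose j) * (-1) ^ (Suc n - j) * g (m + j))
      = (\<Sum>j\<le>Suc n. of_nat (n choose j) * (-1) ^ (Suc n - j) * g (m + j))
        + (\<Sum>j\<le>Suc n. (if j = 0 then 0 else of_nat (n choose (j - 1))) * (-1) ^ (Suc n - j) * g (m + j))"
  proof (subst sum.distrib[symmetric], rule sum.cong)
    fix j
    show "of_nat (Suc n choose j) * (-1) ^ (Suc n - j) * g (m + j)
        = of_nat (n choose j) * (-1) ^ (Suc n - j) * g (m + j)
          + (if j = 0 then 0 else of_nat (n choose (j - 1))) * (-1) ^ (Suc n - j) * g (m + j)"
      by (cases j) (simp_all add: algebra_simps)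
  qed simp
  have lower: "(\<Sum>j\<le>Suc n. of_nat (n choose j) * (-1) ^ (Suc n - j) * g (m + j))
      = - (\<Sum>j\<le>n. ?t j * g (m + j))"
    by (simp add: sum_negf[symmetric] Suc_diff_le binomial_eq_0)
  have upper: "(\<Sum>j\<le>Suc n. (if j = 0 then 0 else of_nat (n choose (j - 1))) * (-1) ^ (Suc n - j) * g (m + j))
      = (\<Sum>j\<le>n. ?t j * g (Suc m + j))"
    by (subst sum.atMost_Suc_shift) simp
  have "(fdiff ^^ Suc n) g m = (fdiff ^^ n) g (Suc m) - (fdiff ^^ n) g m"
    by (simp add: fdiff_def)
  also have "\<dots> = (\<Sum>j\<le>n. ?t j * g (Suc m + j)) - (\<Sum>j\<le>n. ?t j * g (m + j))"
    by (simp only: Suc.IH)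
  also have "\<dots> = (\<Sum>j\<le>Suc n. of_nat (Suc n choose j) * (-1) ^ (Suc n - j) * g (m + j))"
    by (simp only: pascal lower upper) simp
  finally show ?case .
qed

(* Pascal's rule in difference form: the difference of a shifted binomial coefficient
   lowers its bottom index by one. *)
lemma fdiff_choose_shift:
  "fdiff (\<lambda>m. int ((m + x) choose Suc b)) = (\<lambda>m. int ((m + x) choose b))"
  by (rule ext) (simp add: fdiff_def)

(* Iterating: the n-th difference of m \<mapsto> C(m+x, b) is m \<mapsto> C(m+x, b-n) as long as
   n \<le> b; once the bottom index reaches 0 the function is constant and its difference 0. *)
lemma iter_fdiff_choose_shift:
  "(fdiff ^^ n) (\<lambda>m. int ((m + x) choose b))
     = (\<lambda>m. if n \<le> b then int ((m + x) choose (b - n)) else 0)"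
proof (induction n)
  case 0
  show ?case by simp
next
  case (Suc n)
  have step: "(fdiff ^^ Suc n) (\<lambda>m. int ((m + x) choose b))
      = fdiff (\<lambda>m. if n \<le> b then int ((m + x) choose (b - n)) else 0)"
    using Suc.IH by simp
  consider "Suc n \<le> b" | "n = b" | "b < n" by linarith
  then show ?case
  proof cases
    case 1
    then have "b - n = Suc (b - Suc n)" by simp
    with 1 step show ?thesis by (simp add: fdiff_choose_shift)
  next
    case 2
    then show ?thesis unfolding step by (simp add: fdiff_def)
  next
    case 3
    then show ?thesis unfolding step by (simp add: fdiff_def)
  qed
qed

lemma neg_one_power_diff:
  assumes "k \<le> m" "m \<le> n"
  shows "(-1::'a::comm_ring_1) ^ (m - k) = (-1) ^ (n - k) * (-1) ^ (n - m)"
proof -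
  have "n - k = (m - k) + (n - m)" using assms by simp
  then have "(-1::'a) ^ (n - k) * (-1) ^ (n - m) = (-1) ^ (m - k) * ((-1) * (-1)) ^ (n - m)"
    by (simp only: power_add power_mult_distrib mult.assoc)
  then show ?thesis by simp
qed

theorem lemma4p1:
  fixes n k :: nat
  assumes "k \<le> n"
  shows "(\<Sum>m=k..n. int (n choose m) * int ((m + 2*k) choose (3*k)) * (-1) ^ (m - k))
         = (-1) ^ (n - k) * int ((2*k) choose (n - k))"
proof -
  let ?c = "\<lambda>m. int ((m + 2*k) choose (3*k))"
  have "(\<Sum>m=k..n. int (n choose m) * ?c m * (-1) ^ (m - k))
      = (\<Sum>m=k..n. (-1) ^ (n - k) * (int (n choose m) * (-1) ^ (n - m) * ?c m))"
  proof (rule sum.cong)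
    fix m assume "m \<in> {k..n}"
    then have "(-1::int) ^ (m - k) = (-1) ^ (n - k) * (-1) ^ (n - m)"
      by (simp add: neg_one_power_diff)
    then show "int (n choose m) * ?c m * (-1) ^ (m - k)
        = (-1) ^ (n - k) * (int (n choose m) * (-1) ^ (n - m) * ?c m)"
      by (simp only: mult_ac)
  qed simp
  also have "\<dots> = (-1) ^ (n - k) * (\<Sum>m=k..n. int (n choose m) * (-1) ^ (n - m) * ?c m)"
    by (simp only: sum_distrib_left)
  (* the terms with m < k vanish, since then m + 2k < 3k *)
  also have "(\<Sum>m=k..n. int (n choose m) * (-1) ^ (n - m) * ?c m)
      = (\<Sum>m\<le>n. int (n choose m) * (-1) ^ (n - m) * ?c m)"
    by (rule sum.mono_neutral_left) auto
  also have "\<dots> = (fdiff ^^ n) ?c 0"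
    by (simp add: iter_fdiff_eq_sum)
  (* C(2k, 3k-n) = C(2k, n-k) by symmetry; for n > 3k both sides are 0 *)
  also have "\<dots> = int ((2*k) choose (n - k))"
    using assms binomial_symmetric[of "3*k - n" "2*k"]
    by (auto simp: iter_fdiff_choose_shift)
  finally show ?thesis .
qed

end
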